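(* For every integer $n \geq -1$, $q_n(x) = 2^{n+1} F_{n+1}(x, 1/2)$. Equivalently, as formal power series in $t$, \[ \sum_{n=0}^\infty q_{n-1}(x) \frac{t^n}{n!} = \mathscr{F}(x,1/2;2t) = \left(\frac{1-x}{e^{2t(x-1)}-x}\right)^{1/2}. \]
   Context: Define polynomial sequences $(p_k(x))_{k\ge -1}$ and $(q_k(x))_{k\ge -1}$ by $p_{-1}(x)=0$, $q_{-1}(x)=1$ and, for $k\ge -1$, $p_{k+1}(x) = 2(kx+1)p_k(x) + 2x(1-x)p_k'(x) + q_k(x)$, $q_{k+1}(x) = (2(k+1)x+1)q_k(x) + 2x(1-x)q_k'(x)$. For a permutation $\pi=\pi_1\cdots\pi_n$ of $[n]=\{1,\dots,n\}$, let $\mathrm{exc}(\pi)=|\{i\in[n]:\pi_i>i\}|$ and $\mathrm{cyc}(\pi)$ the number of cycles in its disjoint cycle decomposition. The bivariate Eulerian polynomials are $F_0(x,y)=1$ and $F_n(x,y)=\sum_{\pi\in\mathfrak S_n} x^{\mathrm{exc}(\pi)}y^{\mathrm{cyc}(\pi)}$ for $n>0$, where $\mathfrak S_n$ is the symmetric group on $[n]$; their exponential generating function is $\mathscr{F}(x,y;t)=\sum_{n\ge0}F_n(x,y)t^n/n! = \left(\frac{1-x}{e^{t(x-1)}-x}\right)^y$. *)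

theory Defs
  imports Complex_Main "HOL-Computational_Algebra.Polynomial"
    "HOL-Combinatorics.Permutations" "HOL-Combinatorics.Orbits"
begin

text \<open>PP m = p_(m-1), QQ m = q_(m-1), i.e. shifted by one so that the index is a nat.
  In the recursion, k = m - 1 (as an integer).\<close>
fun PQ :: "nat \<Rightarrow> real poly \<times> real poly" where
  "PQ 0 = (0, 1)"
| "PQ (Suc m) =
     (let (p, q) = PQ m; k = real_of_int (int m - 1) in
       (smult 2 [:1, k:] * p + [:0, 2, -2:] * pderiv p + q,
        [:1, 2 * (k + 1):] * q + [:0, 2, -2:] * pderiv q))"

definition p_seq :: "int \<Rightarrow> real poly" where
  "p_seq k = fst (PQ (nat (k + 1)))"

definition q_seq :: "int \<Rightarrow> real poly" where
  "q_seq k = snd (PQ (nat (k + 1)))"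

definition exc :: "nat \<Rightarrow> (nat \<Rightarrow> nat) \<Rightarrow> nat" where
  "exc n \<pi> = card {i \<in> {1..n}. \<pi> i > i}"

definition cyc :: "nat \<Rightarrow> (nat \<Rightarrow> nat) \<Rightarrow> nat" where
  "cyc n \<pi> = card ((\<lambda>i. orbit \<pi> i) ` {1..n})"

definition F_biv :: "nat \<Rightarrow> real \<Rightarrow> real \<Rightarrow> real" where
  "F_biv n x y = (\<Sum>\<pi> \<in> {\<pi>. \<pi> permutes {1..n}}. x ^ exc n \<pi> * y ^ cyc n \<pi>)"

end

theory Submission
  imports Defs
begin

text \<open>Every permutation of \<open>{1..n+1}\<close> arises exactly once from a permutation \<open>\<pi>\<close> of
  \<open>{1..n}\<close>, either by adding the fixed point \<open>n+1\<close> (one more cycle, same excedances) or by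
  inserting \<open>n+1\<close> after some \<open>a\<close> in its cycle (same number of cycles; the excedances are those
  of \<open>\<pi>\<close> together with \<open>a\<close>). Summing over \<open>a\<close> gives
  \<open>F\<^sub>n\<^sub>+\<^sub>1 = (y + n x) F\<^sub>n + x (1 - x) \<partial>\<^sub>x F\<^sub>n\<close>, and at \<open>y = 1/2\<close> the rescaled
  polynomials \<open>2\<^sup>n F\<^sub>n(x, 1/2)\<close> satisfy exactly the recurrence defining \<open>q\<^sub>n\<^sub>-\<^sub>1\<close>.\<close>

lemma orbit_eq_of_mem:
  assumes "permutation f" "y \<in> orbit f x"
  shows "orbit f y = orbit f x"
  using orbit_cyclic_eq3[OF cyclic_on_orbit'[OF assms(1)] assms(2)] .

text \<open>\<open>\<sigma>\<close> inserts \<open>Suc n\<close> into the cycle of \<open>\<pi>\<close> through \<open>a\<close>: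
  \<open>a \<mapsto> Suc n \<mapsto> \<pi> a\<close>, and \<open>\<sigma>\<close> agrees with \<open>\<pi>\<close> elsewhere.\<close>
locale insertion =
  fixes n :: nat and \<pi> :: "nat \<Rightarrow> nat" and a :: nat
  assumes perm: "\<pi> permutes {1..n}" and a: "a \<in> {1..n}"
begin

definition \<sigma> :: "nat \<Rightarrow> nat" where
  "\<sigma> = transpose (Suc n) (\<pi> a) \<circ> \<pi>"

lemma \<pi>_Suc: "\<pi> (Suc n) = Suc n"
  using perm by (simp add: permutes_not_in)

lemma \<pi>_a: "\<pi> a \<in> {1..n}"
  using permutes_in_image[OF perm] a by blast

lemma \<sigma>_a: "\<sigma> a = Suc n"
  by (simp add: \<sigma>_def)

lemma \<sigma>_Suc: "\<sigma> (Suc n) = \<pi> a"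
  using \<pi>_a by (simp add: \<sigma>_def \<pi>_Suc)

lemma \<sigma>_other:
  assumes "y \<noteq> a" "y \<noteq> Suc n"
  shows "\<sigma> y = \<pi> y"
proof -
  have "\<pi> y \<noteq> \<pi> a" "\<pi> y \<noteq> \<pi> (Suc n)"
    using assms permutes_inj[OF perm] by (metis injD)+
  then show ?thesis by (simp add: \<sigma>_def \<pi>_Suc)
qed

lemma \<sigma>_permutes: "\<sigma> permutes {1..Suc n}"
  unfolding \<sigma>_def
proof (rule permutes_compose)
  show "\<pi> permutes {1..Suc n}"
    using perm by (rule permutes_subset) auto
  show "transpose (Suc n) (\<pi> a) permutes {1..Suc n}"
    using \<pi>_a by (intro permutes_swap_id) auto
qed

lemma permutation_\<sigma>: "permutation \<sigma>"
  using \<sigma>_permutes by (auto simp: permutation_permutes)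

lemma self_in_orbit_\<pi>: "i \<in> orbit \<pi> i"
  using perm by (blast intro: permutation_self_in_orbit finite_atLeastAtMost
      permutation_permutes[THEN iffD2])

lemma orbit_\<pi>_subset: "i \<in> {1..n} \<Longrightarrow> orbit \<pi> i \<subseteq> {1..n}"
  by (rule permutes_orbit_subset[OF perm])

lemma \<pi>_in_orbit_\<sigma>:
  assumes "y \<in> {1..n}"
  shows "\<pi> y \<in> orbit \<sigma> y"
proof (cases "y = a")
  case True
  have "Suc n \<in> orbit \<sigma> a"
    using orbit.base[of \<sigma> a] by (simp add: \<sigma>_a)
  then have "\<sigma> (Suc n) \<in> orbit \<sigma> a"
    by (rule orbit.step)
  then show ?thesis
    by (simp add: True \<sigma>_Suc)
next
  case False
  then have "\<sigma> y = \<pi> y"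
    using assms by (intro \<sigma>_other) auto
  then show ?thesis
    using orbit.base[of \<sigma> y] by simp
qed

lemma orbit_\<pi>_subset_orbit_\<sigma>:
  assumes "i \<in> {1..n}"
  shows "orbit \<pi> i \<subseteq> orbit \<sigma> i"
proof
  fix y assume "y \<in> orbit \<pi> i"
  then show "y \<in> orbit \<sigma> i"
  proof induct
    case base
    show ?case using \<pi>_in_orbit_\<sigma>[OF assms] .
  next
    case (step y)
    then have "y \<in> {1..n}"
      using orbit_\<pi>_subset[OF assms] by blast
    then show ?case
      using orbit_trans[OF \<pi>_in_orbit_\<sigma> step.hyps(2)] by blast
  qed
qed

text \<open>The \<open>\<pi>\<close>-orbit of \<open>i\<close>, enlarged by \<open>Suc n\<close> when it contains \<open>a\<close>, contains \<open>\<sigma> i\<close>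
  and is closed under \<open>\<sigma>\<close>.\<close>
lemma orbit_\<sigma>_subset:
  assumes "i \<in> {1..n}"
  shows "orbit \<sigma> i \<subseteq> orbit \<pi> i \<union> {Suc n}"
proof -
  define S where "S = orbit \<pi> i \<union> {y. y = Suc n \<and> a \<in> orbit \<pi> i}"
  have Suc_notin: "Suc n \<notin> orbit \<pi> i"
    using orbit_\<pi>_subset[OF assms] by auto
  have closed: "\<sigma> y \<in> S" if y: "y \<in> S" for y
  proof (cases "y = Suc n")
    case True
    then have "a \<in> orbit \<pi> i"
      using y Suc_notin by (simp add: S_def)
    then show ?thesis
      using True by (simp add: S_def \<sigma>_Suc orbit.step)
  next
    case False
    then have "y \<in> orbit \<pi> i"
      using y by (simp add: S_def)
    show ?thesis
    proof (cases "y = a")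
      case True
      then show ?thesis
        using \<open>y \<in> orbit \<pi> i\<close> \<sigma>_a by (simp add: S_def)
    next
      case False
      then show ?thesis
        using \<open>y \<in> orbit \<pi> i\<close> \<open>y \<noteq> Suc n\<close> \<sigma>_other by (simp add: S_def orbit.step)
    qed
  qed
  have "y \<in> S" if "y \<in> orbit \<sigma> i" for y
    using that
  proof induct
    case base
    show ?case using closed self_in_orbit_\<pi> by (simp add: S_def)
  next
    case (step y)
    then show ?case using closed by blast
  qed
  then show ?thesis by (auto simp: S_def)
qed

lemma orbit_\<sigma>_minus:
  assumes "i \<in> {1..n}"
  shows "orbit \<sigma> i - {Suc n} = orbit \<pi> i"
proof -
  have "Suc n \<notin> orbit \<pi> i"
    using orbit_\<pi>_subset[OF assms] by auto
  then show ?thesis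
    using orbit_\<pi>_subset_orbit_\<sigma>[OF assms] orbit_\<sigma>_subset[OF assms] by blast
qed

lemma cyc_\<sigma>: "cyc (Suc n) \<sigma> = cyc n \<pi>"
proof -
  have "orbit \<sigma> (Suc n) = orbit \<sigma> a"
    using orbit_eq_of_mem[OF permutation_\<sigma>] orbit.base[of \<sigma> a] \<sigma>_a by metis
  then have orbits: "orbit \<sigma> ` {1..Suc n} = orbit \<sigma> ` {1..n}"
    using a by (auto simp: atLeastAtMostSuc_conv)
  have "inj_on (\<lambda>U. U - {Suc n}) (orbit \<sigma> ` {1..n})"
  proof (rule inj_onI, clarify)
    fix i j assume ij: "i \<in> {1..n}" "j \<in> {1..n}" "orbit \<sigma> i - {Suc n} = orbit \<sigma> j - {Suc n}"
    then have "orbit \<pi> i = orbit \<pi> j"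
      by (simp add: orbit_\<sigma>_minus)
    then have "i \<in> orbit \<sigma> j"
      using self_in_orbit_\<pi>[of i] orbit_\<pi>_subset_orbit_\<sigma>[OF ij(2)] by blast
    then show "orbit \<sigma> i = orbit \<sigma> j"
      by (rule orbit_eq_of_mem[OF permutation_\<sigma>])
  qed
  moreover have "(\<lambda>U. U - {Suc n}) ` orbit \<sigma> ` {1..n} = orbit \<pi> ` {1..n}"
    using orbit_\<sigma>_minus by (simp add: image_image)
  ultimately show ?thesis
    unfolding cyc_def orbits by (metis card_image)
qed

lemma exc_\<sigma>: "exc (Suc n) \<sigma> = exc n \<pi> + (if a < \<pi> a then 0 else 1)"
proof -
  have "{i \<in> {1..Suc n}. i < \<sigma> i} = insert a {i \<in> {1..n}. i < \<pi> i}"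
  proof (intro set_eqI iffI)
    fix i assume i: "i \<in> {i \<in> {1..Suc n}. i < \<sigma> i}"
    have "i \<noteq> Suc n"
      using i \<pi>_a \<sigma>_Suc by auto
    then show "i \<in> insert a {i \<in> {1..n}. i < \<pi> i}"
      using i \<sigma>_other by (cases "i = a") (auto simp: le_Suc_eq)
  next
    fix i assume "i \<in> insert a {i \<in> {1..n}. i < \<pi> i}"
    then show "i \<in> {i \<in> {1..Suc n}. i < \<sigma> i}"
      using a \<sigma>_a \<sigma>_other by (cases "i = a") auto
  qed
  then show ?thesis
    unfolding exc_def using a by (auto simp: card_insert_if)
qed

end

lemma exc_Suc_permutes:
  assumes "\<pi> permutes {1..n}"
  shows "exc (Suc n) \<pi> = exc n \<pi>"
proof -
  have "\<pi> (Suc n) = Suc n"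
    using assms by (simp add: permutes_not_in)
  then have "{i \<in> {1..Suc n}. i < \<pi> i} = {i \<in> {1..n}. i < \<pi> i}"
    by (auto simp: le_Suc_eq)
  then show ?thesis by (simp add: exc_def)
qed

lemma cyc_Suc_permutes:
  assumes "\<pi> permutes {1..n}"
  shows "cyc (Suc n) \<pi> = Suc (cyc n \<pi>)"
proof -
  have "orbit \<pi> (Suc n) = {Suc n}"
    using assms by (simp add: permutes_not_in orbit_eq_singleton_iff)
  moreover have "{Suc n} \<notin> orbit \<pi> ` {1..n}"
    using permutes_orbit_subset[OF assms] by fastforce
  ultimately show ?thesis
    by (simp add: cyc_def atLeastAtMostSuc_conv card_insert_if)
qed

lemma exc_le: "exc n \<pi> \<le> n"
  unfolding exc_def using card_mono[OF finite_atLeastAtMost, of "{i \<in> {1..n}. i < \<pi> i}" 1 n]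
  by fastforce

lemma sum_if_excedance:
  "(\<Sum>a\<in>{1..n}. if a < \<pi> a then u else v) = of_nat (exc n \<pi>) * u + of_nat (n - exc n \<pi>) * (v :: 'a :: semiring_1)"
proof -
  have "{1..n} \<inter> - {a. a < \<pi> a} = {1..n} - {i \<in> {1..n}. i < \<pi> i}"
    by auto
  moreover have "card ({1..n} - {i \<in> {1..n}. i < \<pi> i}) = card {1..n} - exc n \<pi>"
    unfolding exc_def by (rule card_Diff_subset) auto
  moreover have "{1..n} \<inter> {a. a < \<pi> a} = {i \<in> {1..n}. i < \<pi> i}"
    by auto
  ultimately show ?thesis
    by (simp add: sum.If_cases exc_def)
qed

definition perm_monom :: "nat \<Rightarrow> real \<Rightarrow> (nat \<Rightarrow> nat) \<Rightarrow> real poly" where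
  "perm_monom n y \<pi> = smult (y ^ cyc n \<pi>) (monom 1 (exc n \<pi>))"

definition eulerian_poly :: "nat \<Rightarrow> real \<Rightarrow> real poly" where
  "eulerian_poly n y = (\<Sum>\<pi> | \<pi> permutes {1..n}. perm_monom n y \<pi>)"

lemma poly_eulerian_poly: "poly (eulerian_poly n y) x = F_biv n x y"
  by (simp add: eulerian_poly_def perm_monom_def F_biv_def poly_sum poly_monom mult.commute)

lemma eulerian_poly_0: "eulerian_poly 0 y = 1"
proof -
  have "{\<pi>. \<pi> permutes {1..0::nat}} = {id}"
    by (auto simp: permutes_empty)
  moreover have "cyc 0 id = 0" "exc 0 id = 0"
    by (auto simp: cyc_def exc_def)
  ultimately show ?thesis
    by (simp add: eulerian_poly_def perm_monom_def one_poly_def monom_0)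
qed

lemma sum_perm_monom_insertions:
  assumes perm: "\<pi> permutes {1..n}"
  defines "e \<equiv> exc n \<pi>"
  shows "(\<Sum>a\<in>{1..n}. perm_monom (Suc n) y (transpose (Suc n) (\<pi> a) \<circ> \<pi>))
    = smult (y ^ cyc n \<pi>) (smult (real e) (monom 1 e) + smult (real n - real e) (monom 1 (Suc e)))"
proof -
  let ?u = "smult (y ^ cyc n \<pi>) (monom 1 e)" and ?v = "smult (y ^ cyc n \<pi>) (monom 1 (Suc e))"
  have "(\<Sum>a\<in>{1..n}. perm_monom (Suc n) y (transpose (Suc n) (\<pi> a) \<circ> \<pi>))
      = (\<Sum>a\<in>{1..n}. if a < \<pi> a then ?u else ?v)"
  proof (rule sum.cong[OF refl])
    fix a assume "a \<in> {1..n}"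
    then interpret insertion n \<pi> a
      using perm by unfold_locales
    show "perm_monom (Suc n) y (transpose (Suc n) (\<pi> a) \<circ> \<pi>) = (if a < \<pi> a then ?u else ?v)"
      using cyc_\<sigma> exc_\<sigma> by (simp add: perm_monom_def \<sigma>_def e_def)
  qed
  also have "\<dots> = of_nat e * ?u + of_nat (n - e) * ?v"
    unfolding e_def by (rule sum_if_excedance)
  also have "\<dots> = smult (y ^ cyc n \<pi>) (smult (real e) (monom 1 e) + smult (real n - real e) (monom 1 (Suc e)))"
    using exc_le[of n \<pi>] unfolding of_nat_mult_conv_smult e_def
    by (simp add: of_nat_diff smult_add_right mult.commute)
  finally show ?thesis .
qed

lemma pderiv_sum: "pderiv (sum f A) = (\<Sum>a\<in>A. pderiv (f a))"
  using higher_pderiv_sum[of 1 f A] by simp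

lemma eulerian_operator_monom:
  "[:y, real n:] * monom 1 e + [:0, 1, -1:] * pderiv (monom 1 e) =
   smult y (monom 1 e) + smult (real e) (monom 1 e) + smult (real n - real e) (monom 1 (Suc e))"
proof -
  have "poly ([:y, real n:] * monom 1 e + [:0, 1, -1:] * pderiv (monom 1 e)) x =
     poly (smult y (monom 1 e) + smult (real e) (monom 1 e) + smult (real n - real e) (monom 1 (Suc e))) x"
    for x :: real
    by (cases e) (simp_all add: pderiv_monom poly_monom algebra_simps)
  then show ?thesis
    by (rule poly_ext)
qed

lemma eulerian_poly_Suc:
  "eulerian_poly (Suc n) y = [:y, real n:] * eulerian_poly n y + [:0, 1, -1:] * pderiv (eulerian_poly n y)"
proof -
  let ?P = "{\<pi>. \<pi> permutes {1..n}}"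
  have "eulerian_poly (Suc n) y
      = (\<Sum>b\<in>insert (Suc n) {1..n}. \<Sum>\<pi>\<in>?P. perm_monom (Suc n) y (transpose (Suc n) b \<circ> \<pi>))"
  proof -
    have "{1..Suc n} = insert (Suc n) {1..n}"
      by auto
    then show ?thesis
      unfolding eulerian_poly_def by (simp add: sum_over_permutations_insert)
  qed
  also have "\<dots> = (\<Sum>\<pi>\<in>?P. perm_monom (Suc n) y \<pi>
      + (\<Sum>b\<in>{1..n}. perm_monom (Suc n) y (transpose (Suc n) b \<circ> \<pi>)))"
    by (simp add: sum.distrib) (rule sum.swap)
  also have "\<dots> = (\<Sum>\<pi>\<in>?P. smult (y ^ cyc n \<pi>)
      ([:y, real n:] * monom 1 (exc n \<pi>) + [:0, 1, -1:] * pderiv (monom 1 (exc n \<pi>))))"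
  proof (rule sum.cong[OF refl])
    fix \<pi> assume "\<pi> \<in> ?P"
    then have perm: "\<pi> permutes {1..n}" by simp
    have "(\<Sum>b\<in>{1..n}. perm_monom (Suc n) y (transpose (Suc n) b \<circ> \<pi>))
        = (\<Sum>a\<in>{1..n}. perm_monom (Suc n) y (transpose (Suc n) (\<pi> a) \<circ> \<pi>))"
      by (rule sum.reindex_bij_betw[OF permutes_imp_bij[OF perm], symmetric])
    then show "perm_monom (Suc n) y \<pi> + (\<Sum>b\<in>{1..n}. perm_monom (Suc n) y (transpose (Suc n) b \<circ> \<pi>))
        = smult (y ^ cyc n \<pi>) ([:y, real n:] * monom 1 (exc n \<pi>) + [:0, 1, -1:] * pderiv (monom 1 (exc n \<pi>)))"
      unfolding sum_perm_monom_insertions[OF perm] eulerian_operator_monom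
      by (simp add: perm_monom_def exc_Suc_permutes[OF perm] cyc_Suc_permutes[OF perm]
          smult_add_right algebra_simps)
  qed
  also have "\<dots> = [:y, real n:] * eulerian_poly n y + [:0, 1, -1:] * pderiv (eulerian_poly n y)"
    by (simp add: eulerian_poly_def perm_monom_def pderiv_sum
        pderiv_smult sum_distrib_left sum.distrib smult_add_right mult_smult_right)
  finally show ?thesis .
qed

lemma snd_PQ_Suc:
  "snd (PQ (Suc m)) = [:1, 2 * (real_of_int (int m - 1) + 1):] * snd (PQ m)
     + [:0, 2, -2:] * pderiv (snd (PQ m))"
  by (cases "PQ m") (simp add: Let_def)

lemma snd_PQ_eq_eulerian_poly: "snd (PQ m) = smult (2 ^ m) (eulerian_poly m (1/2))"
proof (induction m)
  case 0
  then show ?case by (simp add: eulerian_poly_0)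
next
  case (Suc m)
  have coeffs: "[:1, 2 * (real_of_int (int m - 1) + 1):] = smult 2 [:1/2, real m:]"
    "[:0, 2, -2::real:] = smult 2 [:0, 1, -1:]"
    by simp_all
  show ?case
    unfolding snd_PQ_Suc Suc coeffs eulerian_poly_Suc
    by (simp add: pderiv_smult algebra_simps smult_add_right)
qed

theorem theorem2p4:
  fixes n :: int and x :: real
  assumes "n \<ge> -1"
  shows "poly (q_seq n) x = 2 ^ nat (n + 1) * F_biv (nat (n + 1)) x (1/2)"
  by (simp add: q_seq_def snd_PQ_eq_eulerian_poly poly_eulerian_poly)

end
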